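(* For every $\theta\in[-\pi,\pi]^d\setminus\{0\}$, the spectral radius of the complex matrix $\widehat{\mu}(\theta)$ is strictly smaller than $1$.
   Context: Fix integers $d,p\ge 1$. Let $(Z_n)=(A_n,M_n)$ be a Markov-additive process on $\mathbb{Z}^d\times\{1,\dots,p\}$, i.e. a Markov chain with $\mathbb{P}_{(x,i)}((A_1,M_1)=(x',i'))=\mathbb{P}_{(0,i)}((A_1,M_1)=(x'-x,i'))$ for all $x,x',i,i'$, with jump matrix of sub-probability measures $\mu_{i,j}(x)=\mathbb{P}_{(0,i)}((A_1,M_1)=(x,j))$. It is assumed irreducible, aperiodic (for every state $(x,i)$, $\gcd\{n\ge1:\mathbb{P}_{(x,i)}(Z_n=(x,i))>0\}=1$), and with finite exponential moments ($\sum_x e^{\alpha\|x\|}\mu_{i,j}(x)<\infty$ for all $i,j$, $\alpha>0$). The Fourier transform is the $p\times p$ complex matrix $\widehat\mu(\theta)_{i,j}=\sum_{x\in\mathbb{Z}^d}e^{\mathbf{i}x\cdot\theta}\mu_{i,j}(x)$, $\theta\in\mathbb{R}^d$. *)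

theory Defs
  imports "HOL-Analysis.Analysis" "Jordan_Normal_Form.Spectral_Radius"
begin

text \<open>Markov-additive process on Z^d x {0,...,p-1} (modes indexed 0..p-1 instead of 1..p).
  Z^d is rendered as int^'d (d = CARD('d)); the jump kernel is mu i j x.\<close>

definition state_space :: "nat \<Rightarrow> ((int^'d) \<times> nat) set" where
  "state_space p = UNIV \<times> {..<p}"

definition mak_trans :: "(nat \<Rightarrow> nat \<Rightarrow> int^'d \<Rightarrow> real) \<Rightarrow> (int^'d) \<times> nat \<Rightarrow> (int^'d) \<times> nat \<Rightarrow> real" where
  "mak_trans mu s t = mu (snd s) (snd t) (fst t - fst s)"

fun mak_trans_pow :: "nat \<Rightarrow> (nat \<Rightarrow> nat \<Rightarrow> int^'d \<Rightarrow> real) \<Rightarrow> nat \<Rightarrow> (int^'d) \<times> nat \<Rightarrow> (int^'d) \<times> nat \<Rightarrow> real" where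
  "mak_trans_pow p mu 0 s t = (if s = t then 1 else 0)"
| "mak_trans_pow p mu (Suc n) s t =
     (\<Sum>\<^sub>\<infinity>u\<in>state_space p. mak_trans_pow p mu n s u * mak_trans mu u t)"

definition markov_additive :: "nat \<Rightarrow> (nat \<Rightarrow> nat \<Rightarrow> int^'d \<Rightarrow> real) \<Rightarrow> bool" where
  "markov_additive p mu \<longleftrightarrow>
     (\<forall>i<p. \<forall>j<p. \<forall>x. mu i j x \<ge> 0) \<and>
     (\<forall>i<p. ((\<lambda>(x,j). mu i j x) has_sum 1) (UNIV \<times> {..<p}))"

definition mak_irreducible :: "nat \<Rightarrow> (nat \<Rightarrow> nat \<Rightarrow> int^'d \<Rightarrow> real) \<Rightarrow> bool" where
  "mak_irreducible p mu \<longleftrightarrow>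
     (\<forall>s\<in>state_space p. \<forall>t\<in>state_space p. \<exists>n. mak_trans_pow p mu n s t > 0)"

definition mak_aperiodic :: "nat \<Rightarrow> (nat \<Rightarrow> nat \<Rightarrow> int^'d \<Rightarrow> real) \<Rightarrow> bool" where
  "mak_aperiodic p mu \<longleftrightarrow>
     (\<forall>s\<in>state_space p. Gcd {n. n \<ge> 1 \<and> mak_trans_pow p mu n s s > 0} = 1)"

definition int_vec_norm :: "int^'d \<Rightarrow> real" where
  "int_vec_norm x = norm (\<chi> k. real_of_int (x $ k))"

definition mak_exp_moments :: "nat \<Rightarrow> (nat \<Rightarrow> nat \<Rightarrow> int^'d \<Rightarrow> real) \<Rightarrow> bool" where
  "mak_exp_moments p mu \<longleftrightarrow>
     (\<forall>i<p. \<forall>j<p. \<forall>\<alpha>>0. (\<lambda>x. exp (\<alpha> * int_vec_norm x) * mu i j x) summable_on UNIV)"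

definition int_real_dot :: "int^'d \<Rightarrow> real^'d \<Rightarrow> real" where
  "int_real_dot x \<theta> = (\<Sum>k\<in>UNIV. real_of_int (x $ k) * \<theta> $ k)"

definition mu_hat :: "nat \<Rightarrow> (nat \<Rightarrow> nat \<Rightarrow> int^'d \<Rightarrow> real) \<Rightarrow> real^'d \<Rightarrow> complex mat" where
  "mu_hat p mu \<theta> = Matrix.mat p p (\<lambda>(i,j).
      \<Sum>\<^sub>\<infinity>x\<in>UNIV. cis (int_real_dot x \<theta>) * complex_of_real (mu i j x))"

end

theory Submission
  imports Defs
begin

text \<open>Let \<open>\<lambda>\<close> be an eigenvalue of \<open>mu_hat p mu \<theta>\<close> with eigenvector \<open>v\<close>. Row \<open>i\<close> of the
  eigenvalue equation exhibits \<open>\<lambda> v\<^sub>i\<close> as the mean of the numbers \<open>e^(i x\<cdot>\<theta>) v\<^sub>j\<close>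
  under the probability weights \<open>\<mu>\<^sub>i\<^sub>j(x)\<close>. At an index \<open>i\<^sub>0\<close> where \<open>|v\<^sub>i|\<close> is maximal
  this gives \<open>|\<lambda>| \<le> 1\<close>; if \<open>|\<lambda>| = 1\<close>, the mean is extremal, which forces
  \<open>e^(i x\<cdot>\<theta>) v\<^sub>j = \<lambda> v\<^sub>i\<close> for every jump \<open>(x, j)\<close> of positive probability. Along paths this
  becomes \<open>e^(i y\<cdot>\<theta>) v\<^sub>j = \<lambda>\<^sup>n v\<^sub>i\<^sub>0\<close> whenever \<open>(y, j)\<close> is reachable from \<open>(0, i\<^sub>0)\<close> in
  \<open>n\<close> steps. By aperiodicity the returns to \<open>(0, i\<^sub>0)\<close> give \<open>\<lambda>\<^sup>n = 1\<close> for a set of \<open>n\<close>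
  with gcd 1, so \<open>\<lambda> = 1\<close>; by irreducibility \<open>(e\<^sub>l, i\<^sub>0)\<close> is reachable, so \<open>e^(i \<theta>\<^sub>l) = 1\<close>
  and hence \<open>\<theta>\<^sub>l = 0\<close> since \<open>|\<theta>\<^sub>l| \<le> \<pi>\<close>.\<close>

lemma has_sum_Times_finite:
  fixes f :: "'a \<times> 'b \<Rightarrow> 'c::topological_comm_monoid_add"
  assumes "finite B" and "\<And>j. j \<in> B \<Longrightarrow> ((\<lambda>x. f (x, j)) has_sum s j) A"
  shows "(f has_sum (\<Sum>j\<in>B. s j)) (A \<times> B)"
  using assms
proof (induction B rule: finite_induct)
  case empty
  then show ?case by simp
next
  case (insert j B)
  have "inj_on (\<lambda>x. (x, j)) A" and "(\<lambda>x. (x, j)) ` A = A \<times> {j}"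
    by (auto simp: inj_on_def)
  then have "(f has_sum s j) (A \<times> {j})"
    using has_sum_reindex[of "\<lambda>x. (x, j)" A f] insert.prems by (simp add: o_def)
  moreover have "(f has_sum (\<Sum>j\<in>B. s j)) (A \<times> B)"
    using insert by simp
  ultimately have "(f has_sum s j + (\<Sum>j\<in>B. s j)) (A \<times> {j} \<union> A \<times> B)"
    using insert.hyps by (intro has_sum_Un_disjoint) auto
  moreover have "A \<times> {j} \<union> A \<times> B = A \<times> insert j B"
    by auto
  ultimately show ?case
    using insert.hyps by simp
qed

lemma has_sum_weighted_mean_norm_le:
  fixes f :: "'a \<Rightarrow> 'b::real_inner"
  assumes P_nonneg: "\<And>a. a \<in> A \<Longrightarrow> P a \<ge> 0" and P_sum: "(P has_sum 1) A"
    and f_le: "\<And>a. a \<in> A \<Longrightarrow> norm (f a) \<le> M"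
    and mean: "((\<lambda>a. P a *\<^sub>R f a) has_sum c) A"
  shows "norm c \<le> M"
proof -
  have "((\<lambda>a. P a * inner c (f a)) has_sum inner c c) A"
    using has_sum_bounded_linear[OF bounded_linear_inner_right mean] by simp
  moreover have "((\<lambda>a. P a * (norm c * M)) has_sum norm c * M) A"
    using has_sum_cmult_left[OF P_sum] by simp
  moreover have "P a * inner c (f a) \<le> P a * (norm c * M)" if "a \<in> A" for a
    using norm_cauchy_schwarz[of c "f a"] f_le[OF that]
    by (intro mult_left_mono P_nonneg that) (simp add: order_trans mult_left_mono)
  ultimately have "norm c * norm c \<le> norm c * M"
    by (simp add: has_sum_mono flip: power2_norm_eq_inner power2_eq_square)
  moreover have "A \<noteq> {}"
  proof
    assume "A = {}"
    with P_sum have "(P has_sum 1) {}"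
      by simp
    from has_sum_unique[OF this has_sum_empty] show False
      by simp
  qed
  then obtain a where "a \<in> A"
    by blast
  then have "M \<ge> 0"
    using f_le norm_ge_zero order_trans by blast
  ultimately show ?thesis
    by (cases "norm c = 0") auto
qed

lemma has_sum_weighted_mean_eq_if_norm_eq:
  fixes f :: "'a \<Rightarrow> 'b::real_inner"
  assumes P_nonneg: "\<And>a. a \<in> A \<Longrightarrow> P a \<ge> 0" and P_sum: "(P has_sum 1) A"
    and f_le: "\<And>a. a \<in> A \<Longrightarrow> norm (f a) \<le> M"
    and mean: "((\<lambda>a. P a *\<^sub>R f a) has_sum c) A"
    and c: "norm c = M" and a: "a \<in> A" "P a > 0"
  shows "f a = c"
proof -
  have inner_le: "inner c (f b) \<le> M\<^sup>2" if "b \<in> A" for b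
  proof -
    have "norm c * norm (f b) \<le> M\<^sup>2"
      using f_le[OF that] c[symmetric] by (simp add: power2_eq_square mult_left_mono)
    then show ?thesis
      using norm_cauchy_schwarz[of c "f b"] by linarith
  qed
  have "((\<lambda>b. P b * M\<^sup>2 + - inner c (P b *\<^sub>R f b)) has_sum M\<^sup>2 + - inner c c) A"
    using has_sum_add[OF has_sum_cmult_left[OF P_sum, of "M\<^sup>2"]
        has_sum_uminusI[OF has_sum_bounded_linear[OF bounded_linear_inner_right mean]]]
    by simp
  then have "((\<lambda>b. P b * M\<^sup>2 - P b * inner c (f b)) has_sum M\<^sup>2 - inner c c) A"
    by simp
  then have "P a * M\<^sup>2 - P a * inner c (f a) = 0"
    using c a(1) P_nonneg inner_le
    by (intro nonneg_has_sum_le_0D) (auto simp: power2_norm_eq_inner simp flip: right_diff_distrib)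
  then have "inner c (f a) = M\<^sup>2"
    using a(2) by (simp flip: right_diff_distrib)
  have "(norm (f a - c))\<^sup>2 = (norm (f a))\<^sup>2 - 2 * inner c (f a) + (norm c)\<^sup>2"
    by (simp add: power2_norm_eq_inner inner_diff_left inner_diff_right inner_commute)
  also have "\<dots> \<le> 0"
    using \<open>inner c (f a) = M\<^sup>2\<close> c power_mono[OF f_le[OF a(1)] norm_ge_zero] by simp
  finally show ?thesis
    by simp
qed

lemma eq_1_if_power_eq_1_Gcd:
  fixes z :: "'a::monoid_mult"
  assumes pow: "\<And>n. n \<in> S \<Longrightarrow> z ^ n = 1" and Gcd: "Gcd S = (1::nat)"
  shows "z = 1"
proof -
  obtain n0 where n0: "n0 \<in> S" "n0 > 0"
    using Gcd Gcd_0_iff[of S] by fastforce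
  define k where "k = (LEAST k. k > 0 \<and> z ^ k = 1)"
  have k: "k > 0" "z ^ k = 1"
    using LeastI[of "\<lambda>k. k > 0 \<and> z ^ k = 1" n0] n0 pow unfolding k_def by auto
  have "k dvd n" if "n \<in> S" for n
  proof -
    have "z ^ n = (z ^ k) ^ (n div k) * z ^ (n mod k)"
      by (metis div_mult_mod_eq power_add power_mult mult.commute)
    then have "z ^ (n mod k) = 1"
      using k pow[OF that] by simp
    with k have "n mod k = 0"
      using not_less_Least[of "n mod k" "\<lambda>k. k > 0 \<and> z ^ k = 1"] unfolding k_def[symmetric]
      by (meson bot_nat_0.not_eq_extremum mod_less_divisor)
    then show ?thesis
      by (simp add: dvd_eq_mod_eq_0)
  qed
  then have "k = 1"
    using Gcd Gcd_greatest by (metis nat_dvd_1_iff_1)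
  then show ?thesis
    using k by simp
qed

lemma cis_eq_1_imp_eq_0:
  assumes "\<bar>t\<bar> \<le> pi" and "cis t = 1"
  shows "t = 0"
proof -
  have "cos t = 1"
    using arg_cong[OF assms(2), of Re] by simp
  then obtain m :: int where m: "t = m * 2 * pi"
    by (auto simp: cos_one_2pi_int)
  then have "\<bar>real_of_int m\<bar> * 2 \<le> 1"
    using assms(1) by (simp add: abs_mult)
  then have "m = 0"
    by linarith
  with m show ?thesis
    by simp
qed

lemma int_real_dot_0 [simp]: "int_real_dot 0 \<theta> = 0"
  by (simp add: int_real_dot_def)

lemma int_real_dot_add: "int_real_dot (x + y) \<theta> = int_real_dot x \<theta> + int_real_dot y \<theta>"
  by (simp add: int_real_dot_def distrib_right sum.distrib)

lemma int_real_dot_axis: "int_real_dot (axis l 1) \<theta> = \<theta> $ l"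
proof -
  have "(\<lambda>k. real_of_int (axis l 1 $ k) * \<theta> $ k) = (\<lambda>k. if k = l then \<theta> $ k else 0)"
    by (auto simp: axis_def)
  then show ?thesis
    unfolding int_real_dot_def by (simp only:) simp
qed

lemma mak_trans_nonneg:
  assumes "markov_additive p mu" and "s \<in> state_space p" and "t \<in> state_space p"
  shows "mak_trans mu s t \<ge> 0"
  using assms by (auto simp: markov_additive_def mak_trans_def state_space_def)

lemma mak_trans_pow_nonneg:
  assumes "markov_additive p mu" and "t \<in> state_space p"
  shows "mak_trans_pow p mu n s t \<ge> 0"
  using assms(2)
proof (induction n arbitrary: t)
  case 0
  then show ?case by simp
next
  case (Suc n)
  then show ?case
    using mak_trans_nonneg[OF assms(1) _ Suc.prems] by (auto intro!: infsum_nonneg mult_nonneg_nonneg)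
qed

lemma mak_trans_pow_Suc_pos_imp:
  assumes "markov_additive p mu" and "t \<in> state_space p"
    and "mak_trans_pow p mu (Suc n) s t > 0"
  shows "\<exists>u\<in>state_space p. mak_trans_pow p mu n s u > 0 \<and> mak_trans mu u t > 0"
proof (rule ccontr)
  assume "\<not> ?thesis"
  then have "mak_trans_pow p mu n s u * mak_trans mu u t = 0" if "u \<in> state_space p" for u
    using that mak_trans_pow_nonneg[OF assms(1) that] mak_trans_nonneg[OF assms(1) that assms(2)]
    by (auto simp: less_le)
  then have "mak_trans_pow p mu (Suc n) s t = 0"
    by (simp add: infsum_0)
  with assms(3) show False
    by simp
qed

lemma spectral_radius_eigenvector:
  fixes A :: "complex mat"
  assumes "A \<in> carrier_mat n n" and "n > 0"
  obtains ev v where "v \<in> carrier_vec n" "v \<noteq> 0\<^sub>v n" "A *\<^sub>v v = ev \<cdot>\<^sub>v v"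
    "cmod ev = spectral_radius A"
  using spectral_radius_mem_max(1)[OF assms] assms(1)
  unfolding spectrum_def eigenvalue_def eigenvector_def by auto

lemma vec_index_norm_max:
  fixes v :: "'a::real_normed_vector vec"
  assumes "v \<in> carrier_vec n" and "v \<noteq> 0\<^sub>v n"
  obtains i where "i < n" "vec_index v i \<noteq> 0"
    "\<And>j. j < n \<Longrightarrow> norm (vec_index v j) \<le> norm (vec_index v i)"
proof -
  obtain j0 where j0: "j0 < n" "vec_index v j0 \<noteq> 0"
    using assms by (metis carrier_vecD eq_vecI index_zero_vec)
  define M where "M = Max ((\<lambda>j. norm (vec_index v j)) ` {..<n})"
  obtain i where i: "i < n" "norm (vec_index v i) = M"
    using Max_in[of "(\<lambda>j. norm (vec_index v j)) ` {..<n}"] j0(1) unfolding M_def by fastforce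
  have le: "norm (vec_index v j) \<le> M" if "j < n" for j
    unfolding M_def using that by (intro Max_ge) auto
  then have "vec_index v i \<noteq> 0"
    using le[OF j0(1)] i(2) j0(2) by auto
  with i le show ?thesis
    using that by simp
qed

context
  fixes p :: nat and mu :: "nat \<Rightarrow> nat \<Rightarrow> int^'d \<Rightarrow> real" and \<theta> :: "real^'d"
    and v :: "complex vec" and ev :: complex
  assumes markov: "markov_additive p mu"
    and v: "v \<in> carrier_vec p"
    and eigen: "mu_hat p mu \<theta> *\<^sub>v v = ev \<cdot>\<^sub>v v"
begin

lemma mu_hat_eigen_row_has_sum:
  assumes i: "i < p"
  shows "((\<lambda>(x, j). mu i j x *\<^sub>R (cis (int_real_dot x \<theta>) * vec_index v j)) has_sum
          ev * vec_index v i) (UNIV \<times> {..<p})"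
proof -
  have nonneg: "mu i j x \<ge> 0" if "j < p" for j x
    using markov i that by (simp add: markov_additive_def)
  have "((\<lambda>(x, j). mu i j x) has_sum 1) (UNIV \<times> {..<p})"
    using markov i by (simp add: markov_additive_def)
  then have "((\<lambda>x. \<Sum>j<p. mu i j x) has_sum 1) UNIV"
    by (rule has_sum_SigmaD) simp
  then have "(\<lambda>x. \<Sum>j<p. mu i j x) summable_on UNIV"
    by (rule has_sum_imp_summable)
  then have "mu i j summable_on UNIV" if "j < p" for j
    by (rule summable_on_comparison_test) (use that nonneg in \<open>auto intro!: member_le_sum\<close>)
  then have summable: "(\<lambda>x. cis (int_real_dot x \<theta>) * complex_of_real (mu i j x)) summable_on UNIV"
    if "j < p" for j
    using that nonneg by (simp add: summable_on_iff_abs_summable_on_complex norm_mult)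
  have "((\<lambda>x. mu i j x *\<^sub>R (cis (int_real_dot x \<theta>) * vec_index v j)) has_sum
      (\<Sum>\<^sub>\<infinity>x. cis (int_real_dot x \<theta>) * complex_of_real (mu i j x)) * vec_index v j) UNIV"
    if "j < p" for j
    using has_sum_cmult_left[OF has_sum_infsum[OF summable[OF that]], of "vec_index v j"]
    by (simp add: scaleR_conv_of_real mult_ac)
  then have "((\<lambda>(x, j). mu i j x *\<^sub>R (cis (int_real_dot x \<theta>) * vec_index v j)) has_sum
      (\<Sum>j<p. (\<Sum>\<^sub>\<infinity>x. cis (int_real_dot x \<theta>) * complex_of_real (mu i j x)) * vec_index v j))
      (UNIV \<times> {..<p})"
    by (intro has_sum_Times_finite) auto
  moreover have "vec_index (mu_hat p mu \<theta> *\<^sub>v v) i = vec_index (ev \<cdot>\<^sub>v v) i"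
    using eigen by simp
  then have "(\<Sum>j<p. (\<Sum>\<^sub>\<infinity>x. cis (int_real_dot x \<theta>) * complex_of_real (mu i j x)) * vec_index v j)
      = ev * vec_index v i"
    using i v by (simp add: mu_hat_def scalar_prod_def atLeast0LessThan)
  ultimately show ?thesis
    by simp
qed

lemma mu_hat_eigen_norm_le:
  assumes "i < p" and "\<And>j. j < p \<Longrightarrow> norm (vec_index v j) \<le> M"
  shows "norm (ev * vec_index v i) \<le> M"
  using markov assms
  by (intro has_sum_weighted_mean_norm_le[OF _ _ _ mu_hat_eigen_row_has_sum[unfolded case_prod_unfold]])
    (auto simp: markov_additive_def case_prod_unfold norm_mult)

lemma mu_hat_eigen_phase_step:
  assumes "i < p" and "\<And>j. j < p \<Longrightarrow> norm (vec_index v j) \<le> M"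
    and "norm (ev * vec_index v i) = M" and "j < p" and "mu i j x > 0"
  shows "cis (int_real_dot x \<theta>) * vec_index v j = ev * vec_index v i"
  using has_sum_weighted_mean_eq_if_norm_eq[OF _ _ _
      mu_hat_eigen_row_has_sum[OF assms(1), unfolded case_prod_unfold], of M "(x, j)"]
    markov assms
  by (auto simp: markov_additive_def case_prod_unfold norm_mult)

lemma mu_hat_eigen_phase_path:
  assumes ev: "cmod ev = 1" and i0: "i0 < p"
    and max: "\<And>j. j < p \<Longrightarrow> norm (vec_index v j) \<le> norm (vec_index v i0)"
    and "j < p" and "mak_trans_pow p mu n (0, i0) (y, j) > 0"
  shows "cis (int_real_dot y \<theta>) * vec_index v j = ev ^ n * vec_index v i0"
  using assms(4,5)
proof (induction n arbitrary: y j)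
  case 0
  then show ?case
    by (simp split: if_splits)
next
  case (Suc n)
  then have "(y, j) \<in> state_space p"
    by (simp add: state_space_def)
  then obtain z k where k: "k < p" and path: "mak_trans_pow p mu n (0, i0) (z, k) > 0"
    and jump: "mu k j (y - z) > 0"
    using mak_trans_pow_Suc_pos_imp[OF markov _ Suc.prems(2)]
    by (force simp: state_space_def mak_trans_def)
  have IH: "cis (int_real_dot z \<theta>) * vec_index v k = ev ^ n * vec_index v i0"
    using Suc.IH[OF k path] .
  have "norm (ev * vec_index v k) = norm (vec_index v i0)"
    using arg_cong[OF IH, of norm] ev by (simp add: norm_mult norm_power)
  then have step: "cis (int_real_dot (y - z) \<theta>) * vec_index v j = ev * vec_index v k"
    using mu_hat_eigen_phase_step[OF k max] Suc.prems(1) jump by blast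
  have "cis (int_real_dot y \<theta>) * vec_index v j
      = cis (int_real_dot z \<theta>) * (cis (int_real_dot (y - z) \<theta>) * vec_index v j)"
    using int_real_dot_add[of z "y - z" \<theta>] by (simp add: cis_mult)
  also have "\<dots> = ev * (cis (int_real_dot z \<theta>) * vec_index v k)"
    using step by (simp add: mult_ac)
  also have "\<dots> = ev ^ Suc n * vec_index v i0"
    using IH by simp
  finally show ?case .
qed


lemma mu_hat_eigenvalue_norm_le_1:
  assumes "v \<noteq> 0\<^sub>v p"
  shows "cmod ev \<le> 1"
proof -
  obtain i where i: "i < p" "vec_index v i \<noteq> 0"
    and max: "\<And>j. j < p \<Longrightarrow> cmod (vec_index v j) \<le> cmod (vec_index v i)"
    by (rule vec_index_norm_max[OF v assms]) blast
  have "cmod ev * cmod (vec_index v i) \<le> 1 * cmod (vec_index v i)"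
    using mu_hat_eigen_norm_le[OF i(1) max] by (simp add: norm_mult)
  with i(2) show ?thesis
    by (simp add: mult_le_cancel_right)
qed

lemma mu_hat_unimodular_eigenvalue_imp_zero:
  assumes irreducible: "mak_irreducible p mu" and aperiodic: "mak_aperiodic p mu"
    and \<theta>_bound: "\<And>k. \<bar>\<theta> $ k\<bar> \<le> pi"
    and "v \<noteq> 0\<^sub>v p" and "cmod ev = 1"
  shows "\<theta> = 0"
proof -
  obtain i0 where i0: "i0 < p" "vec_index v i0 \<noteq> 0"
    and max: "\<And>j. j < p \<Longrightarrow> cmod (vec_index v j) \<le> cmod (vec_index v i0)"
    by (rule vec_index_norm_max[OF v assms(4)]) blast
  have path: "cis (int_real_dot y \<theta>) * vec_index v j = ev ^ n * vec_index v i0"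
    if "j < p" and "mak_trans_pow p mu n (0, i0) (y, j) > 0" for n y j
    using mu_hat_eigen_phase_path[OF assms(5) i0(1)] max that by blast
  have start: "(0, i0) \<in> state_space p"
    using i0 by (simp add: state_space_def)
  have "ev = 1"
  proof (rule eq_1_if_power_eq_1_Gcd)
    show "Gcd {n. n \<ge> 1 \<and> mak_trans_pow p mu n (0, i0) (0, i0) > 0} = 1"
      using aperiodic start unfolding mak_aperiodic_def by blast
  qed (use path[where y = 0 and j = i0] i0 in auto)
  have "\<theta> $ l = 0" for l
  proof (rule cis_eq_1_imp_eq_0)
    obtain n where "mak_trans_pow p mu n (0, i0) (axis l 1, i0) > 0"
      using irreducible start i0(1) by (force simp: mak_irreducible_def state_space_def)
    then have "cis (int_real_dot (axis l 1) \<theta>) * vec_index v i0 = vec_index v i0"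
      using path[OF i0(1)] \<open>ev = 1\<close> by simp
    with i0(2) show "cis (\<theta> $ l) = 1"
      by (simp add: int_real_dot_axis)
  qed (rule \<theta>_bound)
  then show ?thesis
    by (simp add: Finite_Cartesian_Product.vec_eq_iff)
qed

end

theorem lemma2p1:
  fixes p :: nat and mu :: "nat \<Rightarrow> nat \<Rightarrow> int^'d \<Rightarrow> real" and \<theta> :: "real^'d"
  assumes "p \<ge> 1"
    and "markov_additive p mu"
    and "mak_irreducible p mu"
    and "mak_aperiodic p mu"
    and "mak_exp_moments p mu"
    and "\<forall>k. - pi \<le> \<theta> $ k \<and> \<theta> $ k \<le> pi"
    and "\<theta> \<noteq> 0"
  shows "spectral_radius (mu_hat p mu \<theta>) < 1"
proof -
  have "mu_hat p mu \<theta> \<in> carrier_mat p p"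
    by (simp add: mu_hat_def)
  then obtain ev v where v: "v \<in> carrier_vec p" "v \<noteq> 0\<^sub>v p"
    and eigen: "mu_hat p mu \<theta> *\<^sub>v v = ev \<cdot>\<^sub>v v"
    and ev_radius: "cmod ev = spectral_radius (mu_hat p mu \<theta>)"
    by (rule spectral_radius_eigenvector) (use assms(1) in auto)
  have "\<bar>\<theta> $ k\<bar> \<le> pi" for k
    using assms(6) abs_le_iff by fastforce
  then have "cmod ev \<noteq> 1"
    using mu_hat_unimodular_eigenvalue_imp_zero[OF assms(2) v(1) eigen assms(3,4) _ v(2)] assms(7)
    by blast
  moreover have "cmod ev \<le> 1"
    by (rule mu_hat_eigenvalue_norm_le_1[OF assms(2) v(1) eigen v(2)])
  ultimately show ?thesis
    using ev_radius by simp
qed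

end
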